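(* Let $\Gamma_H$ be the H-junction tree with edges $e_1,\dots,e_5$ of propagation times $t_1,\dots,t_5$, where the interior vertices are $A$ (incident to $e_1,e_2,e_3$) and $B$ (incident to $e_3,e_4,e_5$), and let $\Gamma'_H$ be obtained from $\Gamma_H$ by permuting the edges $e_1$ and $e_5$ (so in $\Gamma'_H$ the vertex $A$ is incident to $e_5,e_2,e_3$ and $B$ to $e_3,e_4,e_1$). If $(t_1,\dots,t_5)$ satisfies Assumption 1, then as $T\to\infty$ $$N(\Gamma_H, A, T) - N(\Gamma'_H, A, T) = -\frac{1}{96\, t_2t_4}\left(\frac{1}{t_5} - \frac{1}{t_1}\right) T^3 + o(T^3).$$
   Context: An H-junction has six vertices: two interior vertices of valence $3$ joined by one edge (here $e_3$, the "jumper"), and four valence-one vertices, each joined to one of the interior vertices by one of the remaining four edges (two per interior vertex). Dynamics: each edge $e_i$ is traversed in time $t_i$; at time $0$ the process starts at $A$ (a point departs from $A$ along each incident edge); at a valence-one vertex a point is reflected; if $k$ points arrive simultaneously at an interior vertex of valence $v$, then $v$ points leave it, one along each incident edge. $N(\Gamma,A,T)$ is the total number of points moving on the graph $\Gamma$ at time $T$ when the process starts at vertex $A$. Assumption 1: $t_1,\dots,t_5$ are linearly independent over $\mathbb{Q}$, and for every $1\le m\le 4$ and every $m$-element subset $\{s_{i_1},\dots,s_{i_m}\}\subset\{t_1,\dots,t_5\}$ the number of tuples of nonnegative integers with $s_{i_1}n_{i_1}+\dots+s_{i_m}n_{i_m}\le T$ equals $P_m(s_{i_1},\dots,s_{i_m})T^4+R_m(s_{i_1},\dots,s_{i_m})T^3+o(T^3)$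 as $T\to\infty$, for some coefficients $P_m,R_m$. *)

theory Defs
  imports Complex_Main "HOL-Library.Landau_Symbols"
begin

(* A finite metric graph: edge set E, endpoint map ep (an edge e joins fst (ep e)
   and snd (ep e)), traversal times len. *)
definition incident :: "'e set \<Rightarrow> ('e \<Rightarrow> 'v \<times> 'v) \<Rightarrow> 'v \<Rightarrow> 'e set" where
  "incident E ep v = {e \<in> E. fst (ep e) = v \<or> snd (ep e) = v}"

definition other_end :: "('e \<Rightarrow> 'v \<times> 'v) \<Rightarrow> 'e \<Rightarrow> 'v \<Rightarrow> 'v" where
  "other_end ep e u = (if u = fst (ep e) then snd (ep e) else fst (ep e))"

(* (e, u, s): a point departs from vertex u along edge e at time s. A point departing
   u along e at time s arrives at w = other end at time s + len e; then one point
   departs w along every edge incident to w (for a valence-one vertex this is the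
   reflection; simultaneous arrivals are merged automatically since this is a set). *)
inductive_set moving :: "'e set \<Rightarrow> ('e \<Rightarrow> 'v \<times> 'v) \<Rightarrow> ('e \<Rightarrow> real) \<Rightarrow> 'v
    \<Rightarrow> ('e \<times> 'v \<times> real) set"
  for E ep len A where
  start: "e \<in> incident E ep A \<Longrightarrow> (e, A, 0) \<in> moving E ep len A"
| step: "(e, u, s) \<in> moving E ep len A \<Longrightarrow> e' \<in> incident E ep (other_end ep e u)
     \<Longrightarrow> (e', other_end ep e u, s + len e) \<in> moving E ep len A"

definition num_points :: "'e set \<Rightarrow> ('e \<Rightarrow> 'v \<times> 'v) \<Rightarrow> ('e \<Rightarrow> real) \<Rightarrow> 'v \<Rightarrow> real \<Rightarrow> nat" where
  "num_points E ep len A T = card {(e, u, s). (e, u, s) \<in> moving E ep len A \<and> s \<le> T \<and> T < s + len e}"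

(* H-junction: interior vertices A = 0, B = 1; leaves 2,3,4,5; edges 1..5, e3 the jumper *)
definition H_edges :: "nat set" where "H_edges = {1..5}"

definition H_ends :: "nat \<Rightarrow> nat \<times> nat" where
  "H_ends e = (if e = 1 then (0, 2) else if e = 2 then (0, 3) else if e = 3 then (0, 1)
               else if e = 4 then (1, 4) else (1, 5))"

definition H'_ends :: "nat \<Rightarrow> nat \<times> nat" where
  "H'_ends e = (if e = 5 then (0, 2) else if e = 2 then (0, 3) else if e = 3 then (0, 1)
               else if e = 4 then (1, 4) else (1, 5))"

definition vA :: nat where "vA = 0"

definition lattice_count :: "(nat \<Rightarrow> real) \<Rightarrow> nat set \<Rightarrow> real \<Rightarrow> nat" where
  "lattice_count t S T = card {n :: nat \<Rightarrow> nat. (\<forall>i. i \<notin> S \<longrightarrow> n i = 0) \<and>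
                                 (\<Sum>i\<in>S. t i * real (n i)) \<le> T}"

definition assumption1 :: "(nat \<Rightarrow> real) \<Rightarrow> bool" where
  "assumption1 t \<longleftrightarrow>
     (\<forall>q :: nat \<Rightarrow> rat. (\<Sum>i=1..5. of_rat (q i) * t i) = 0 \<longrightarrow> (\<forall>i\<in>{1..5}. q i = 0)) \<and>
     (\<forall>S. S \<subseteq> {1..5} \<and> 1 \<le> card S \<and> card S \<le> 4 \<longrightarrow>
        (\<exists>P R :: real. (\<lambda>T. real (lattice_count t S T) - (P * T ^ 4 + R * T ^ 3))
                          \<in> o[at_top](\<lambda>T. T ^ 3)))"

end

theory Submission
  imports Defs "HOL-Real_Asymp.Real_Asymp" "HOL-Combinatorics.Permutations"
begin

text \<open>A point moving at time \<open>T\<close> is determined by a walk from \<open>A\<close>, recorded as its end vertex and its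
  vector \<open>n\<close> of edge traversal counts, together with the edge it is currently on; by the rational
  independence of the \<open>t\<^sub>i\<close> different walks never meet. Counting the points on each edge from each of
  its ends, the walks ending at a vertex appear with both signs and cancel, leaving for every directed
  edge the walks at its head that do not extend a walk through that edge. On the H-junction the
  reachable \<open>(u, n)\<close> are described by parities and by the condition that the leaves behind the jumper
  are used only after the jumper, so \<open>N(\<Gamma>\<^sub>H, A, T)\<close> becomes a sum of nine counts of lattice points in
  halved simplices. \<open>\<Gamma>'\<^sub>H\<close> is \<open>\<Gamma>\<^sub>H\<close> with \<open>t\<^sub>1\<close> and \<open>t\<^sub>5\<close> exchanged. In the difference only the two
  four-dimensional counts over \<open>{2,3,4,5}\<close> and \<open>{1,2,3,4}\<close> contribute at order \<open>T\<^sup>3\<close>, through a shift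
  of their argument by \<open>t\<^sub>3 / 2\<close>, and their leading coefficients \<open>1 / (24 \<Prod>\<^sub>i\<^sub>\<in>\<^sub>S t\<^sub>i)\<close> are forced by
  comparing the counts with volumes.\<close>

section \<open>Lattice points in simplices\<close>

definition lattice_set :: "('i \<Rightarrow> real) \<Rightarrow> 'i set \<Rightarrow> real \<Rightarrow> ('i \<Rightarrow> nat) set" where
  "lattice_set t S x = {n. (\<forall>i. i \<notin> S \<longrightarrow> n i = 0) \<and> (\<Sum>i\<in>S. t i * real (n i)) \<le> x}"

lemma lattice_count_eq_card: "lattice_count t S x = card (lattice_set t S x)"
  by (simp add: lattice_count_def lattice_set_def)

lemma finite_lattice_set:
  assumes "finite S" and pos: "\<forall>i\<in>S. t i > 0"
  shows "finite (lattice_set t S x)"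
proof -
  define K where "K = (\<Sum>i\<in>S. nat \<lfloor>x / t i\<rfloor>)"
  have "lattice_set t S x \<subseteq> {n. \<forall>i. (i \<in> S \<longrightarrow> n i \<in> {0..K}) \<and> (i \<notin> S \<longrightarrow> n i = 0)}"
  proof (safe)
    fix n i assume n: "n \<in> lattice_set t S x" and i: "i \<in> S"
    have "t i * real (n i) \<le> (\<Sum>j\<in>S. t j * real (n j))"
      using i pos \<open>finite S\<close> by (intro member_le_sum) (auto simp: less_imp_le)
    also have "\<dots> \<le> x" using n by (simp add: lattice_set_def)
    finally have "real (n i) \<le> x / t i" using pos i by (simp add: field_simps)
    hence "n i \<le> nat \<lfloor>x / t i\<rfloor>" by linarith
    also have "\<dots> \<le> K" unfolding K_def using i \<open>finite S\<close> by (intro member_le_sum) auto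
    finally show "n i \<in> {0..K}" by simp
  qed (simp add: lattice_set_def)
  moreover have "finite {n. \<forall>i. (i \<in> S \<longrightarrow> n i \<in> {0..K}) \<and> (i \<notin> S \<longrightarrow> n i = 0)}"
    by (rule finite_set_of_finite_funs) (use \<open>finite S\<close> in auto)
  ultimately show ?thesis by (rule finite_subset)
qed

lemma lattice_set_empty_if_neg:
  assumes "\<forall>i\<in>S. t i > 0" and "x < 0"
  shows "lattice_set t S x = {}"
proof -
  have "0 \<le> (\<Sum>i\<in>S. t i * real (n i))" for n
    using assms(1) by (intro sum_nonneg) (simp add: less_imp_le)
  hence "\<not> (\<Sum>i\<in>S. t i * real (n i)) \<le> x" for n using assms(2) by (meson leD le_less_trans)
  thus ?thesis by (simp add: lattice_set_def)
qed

lemma lattice_count_remove: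
  assumes "finite S" and pos: "\<forall>i\<in>S. t i > 0" and "j \<in> S"
  shows "lattice_count t S x = lattice_count t (S - {j}) x + lattice_count t S (x - t j)"
proof -
  let ?L = "lattice_set t S x"
  have sum_j: "(\<Sum>i\<in>S. t i * real (n i)) = t j * real (n j) + (\<Sum>i\<in>S-{j}. t i * real (n i))" for n
    using assms(1,3) by (simp add: sum.remove)
  have sum_upd: "(\<Sum>i\<in>S-{j}. t i * real ((n(j := k)) i)) = (\<Sum>i\<in>S-{j}. t i * real (n i))" for n k
    by (intro sum.cong) auto
  have zero: "{n \<in> ?L. n j = 0} = lattice_set t (S - {j}) x"
    by (auto simp: lattice_set_def sum_j)
  have "bij_betw (\<lambda>n. n(j := n j - 1)) {n \<in> ?L. n j \<noteq> 0} (lattice_set t S (x - t j))"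
  proof (rule bij_betw_byWitness[where f' = "\<lambda>n. n(j := Suc (n j))"])
    show "(\<lambda>n. n(j := n j - 1)) ` {n \<in> ?L. n j \<noteq> 0} \<subseteq> lattice_set t S (x - t j)"
      using sum_j sum_upd \<open>j \<in> S\<close>
      by (auto simp: lattice_set_def algebra_simps)
    show "(\<lambda>n. n(j := Suc (n j))) ` lattice_set t S (x - t j) \<subseteq> {n \<in> ?L. n j \<noteq> 0}"
      using sum_j sum_upd \<open>j \<in> S\<close>
      by (auto simp: lattice_set_def algebra_simps)
  qed auto
  hence "card {n \<in> ?L. n j \<noteq> 0} = lattice_count t S (x - t j)"
    by (simp add: bij_betw_same_card lattice_count_eq_card)
  moreover have "card ?L = card {n \<in> ?L. n j = 0} + card {n \<in> ?L. n j \<noteq> 0}"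
  proof -
    have "?L = {n \<in> ?L. n j = 0} \<union> {n \<in> ?L. n j \<noteq> 0}" by blast
    thus ?thesis using finite_lattice_set[OF assms(1,2)]
      by (metis (no_types, lifting) card_Un_disjoint disjoint_iff finite_Un mem_Collect_eq)
  qed
  ultimately show ?thesis by (simp add: zero lattice_count_eq_card)
qed

lemma lattice_count_comp:
  assumes "bij \<sigma>"
  shows "lattice_count (t \<circ> \<sigma>) S x = lattice_count t (\<sigma> ` S) x"
proof -
  have inv_cancel: "inv \<sigma> (\<sigma> i) = i" "\<sigma> (inv \<sigma> i) = i" for i
    using assms by (simp_all add: bij_is_inj bij_is_surj surj_f_inv_f)
  have "bij_betw (\<lambda>n. n \<circ> inv \<sigma>) (lattice_set (t \<circ> \<sigma>) S x) (lattice_set t (\<sigma> ` S) x)"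
  proof (rule bij_betw_byWitness[where f' = "\<lambda>m. m \<circ> \<sigma>"])
    have sum: "(\<Sum>i\<in>\<sigma> ` S. t i * real (m i)) = (\<Sum>i\<in>S. t (\<sigma> i) * real (m (\<sigma> i)))" for m
      using sum.reindex[OF inj_on_subset[OF bij_is_inj[OF assms] subset_UNIV]] by simp
    show "(\<lambda>n. n \<circ> inv \<sigma>) ` lattice_set (t \<circ> \<sigma>) S x \<subseteq> lattice_set t (\<sigma> ` S) x"
      by (auto simp: lattice_set_def sum inv_cancel) (metis image_eqI inv_cancel(2))
    show "(\<lambda>m. m \<circ> \<sigma>) ` lattice_set t (\<sigma> ` S) x \<subseteq> lattice_set (t \<circ> \<sigma>) S x"
      using assms by (auto simp: lattice_set_def sum inj_image_mem_iff bij_is_inj)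
  qed (auto simp: fun_eq_iff inv_cancel)
  thus ?thesis by (simp add: bij_betw_same_card lattice_count_eq_card)
qed

lemma power_diff_le:
  fixes x y :: real
  assumes "0 \<le> y" "y \<le> x"
  shows "x ^ Suc m - y ^ Suc m \<le> real (Suc m) * x ^ m * (x - y)"
proof -
  have "(\<Sum>i<Suc m. y ^ (m - i) * x ^ i) \<le> (\<Sum>i<Suc m. x ^ m)"
  proof (rule sum_mono)
    fix i assume "i \<in> {..<Suc m}"
    hence "y ^ (m - i) * x ^ i \<le> x ^ (m - i) * x ^ i"
      using assms by (intro mult_right_mono power_mono) auto
    also have "\<dots> = x ^ m" using \<open>i \<in> {..<Suc m}\<close> by (simp flip: power_add)
    finally show "y ^ (m - i) * x ^ i \<le> x ^ m" .
  qed
  hence "(x - y) * (\<Sum>i<Suc m. y ^ (m - i) * x ^ i) \<le> (x - y) * (\<Sum>i<Suc m. x ^ m)"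
    using assms by (intro mult_left_mono) auto
  moreover have "x ^ Suc m - y ^ Suc m = (x - y) * (\<Sum>i<Suc m. y ^ (m - i) * x ^ i)"
    using power_diff_sumr2[of x "Suc m" y] by simp
  ultimately show ?thesis by (simp add: mult_ac)
qed

lemma power_diff_ge:
  fixes x y :: real
  assumes "0 \<le> y" "y \<le> x"
  shows "real (Suc m) * y ^ m * (x - y) \<le> x ^ Suc m - y ^ Suc m"
proof -
  have "(\<Sum>i<Suc m. y ^ m) \<le> (\<Sum>i<Suc m. y ^ (m - i) * x ^ i)"
  proof (rule sum_mono)
    fix i assume "i \<in> {..<Suc m}"
    hence "y ^ m = y ^ (m - i) * y ^ i" by (simp flip: power_add)
    also have "\<dots> \<le> y ^ (m - i) * x ^ i" using assms by (intro mult_left_mono power_mono) auto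
    finally show "y ^ m \<le> y ^ (m - i) * x ^ i" .
  qed
  hence "(x - y) * (\<Sum>i<Suc m. y ^ m) \<le> (x - y) * (\<Sum>i<Suc m. y ^ (m - i) * x ^ i)"
    using assms by (intro mult_left_mono) auto
  moreover have "x ^ Suc m - y ^ Suc m = (x - y) * (\<Sum>i<Suc m. y ^ (m - i) * x ^ i)"
    using power_diff_sumr2[of x "Suc m" y] by simp
  ultimately show ?thesis by (simp add: mult_ac)
qed

text \<open>Unrolled, \<open>rec\<close> says \<open>f x = g x + g (x - \<tau>) + g (x - 2 \<tau>) + \<dots>\<close>; each summand is compared with
  a slice of the integral of \<open>(m + 1) x ^ m\<close>.\<close>
lemma power_bounds_strip_sum:
  fixes f g :: "real \<Rightarrow> real"
  assumes \<tau>: "\<tau> > 0" and a: "a > 0" and \<sigma>: "\<sigma> \<ge> 0"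
    and rec: "\<And>x. 0 \<le> x \<Longrightarrow> f x = g x + f (x - \<tau>)"
    and neg: "\<And>x. x < 0 \<Longrightarrow> f x = 0"
    and g: "\<And>x. 0 \<le> x \<Longrightarrow> x ^ m \<le> a * g x \<and> a * g x \<le> (x + \<sigma>) ^ m"
    and x: "0 \<le> x"
  shows "x ^ Suc m \<le> real (Suc m) * \<tau> * a * f x \<and> real (Suc m) * \<tau> * a * f x \<le> (x + \<sigma> + \<tau>) ^ Suc m"
proof -
  define c where "c = real (Suc m) * \<tau>"
  have c: "c \<ge> 0" using \<tau> by (simp add: c_def)
  obtain N :: nat where "x < real N * \<tau>"
    using reals_Archimedean2[of "x / \<tau>"] \<tau> by (auto simp: field_simps)
  with x show ?thesis unfolding c_def[symmetric]
  proof (induction N arbitrary: x)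
    case 0
    thus ?case by simp
  next
    case (Suc N)
    define y where "y = x - \<tau>"
    have tail: "x ^ Suc m - c * x ^ m \<le> c * a * f y \<and> c * a * f y \<le> (x + \<sigma>) ^ Suc m"
    proof (cases "y < 0")
      case True
      have "x ^ Suc m \<le> \<tau> * x ^ m"
        using True Suc.prems(1) by (simp add: y_def mult_right_mono)
      also have "\<dots> \<le> c * x ^ m" using \<tau> Suc.prems(1) by (simp add: c_def mult_right_mono)
      finally show ?thesis using neg[OF True] Suc.prems(1) \<sigma> by simp
    next
      case False
      have "y < real N * \<tau>" using Suc.prems(2) by (simp add: y_def algebra_simps)
      with False have IH: "y ^ Suc m \<le> c * a * f y \<and> c * a * f y \<le> (y + \<sigma> + \<tau>) ^ Suc m"
        using Suc.IH[of y] by simp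
      have "x ^ Suc m - y ^ Suc m \<le> c * x ^ m"
        using power_diff_le[of y x m] False \<tau> by (simp add: y_def c_def mult_ac)
      thus ?thesis using IH by (simp add: y_def algebra_simps)
    qed
    have gx: "c * x ^ m \<le> c * a * g x \<and> c * a * g x \<le> c * (x + \<sigma>) ^ m"
      using g[OF Suc.prems(1)] c by (auto simp: mult.assoc intro: mult_left_mono)
    have "c * (x + \<sigma>) ^ m \<le> (x + \<sigma> + \<tau>) ^ Suc m - (x + \<sigma>) ^ Suc m"
      using power_diff_ge[of "x + \<sigma>" "x + \<sigma> + \<tau>" m] Suc.prems(1) \<sigma> \<tau> by (simp add: c_def mult_ac)
    moreover have "c * a * f x = c * a * g x + c * a * f y"
      using rec[OF Suc.prems(1)] by (simp add: y_def algebra_simps)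
    ultimately show ?case using tail gx by linarith
  qed
qed

lemma lattice_count_bounds:
  assumes "finite S" and "\<forall>i\<in>S. t i > 0" and "0 \<le> x"
  shows "x ^ card S \<le> fact (card S) * (\<Prod>i\<in>S. t i) * real (lattice_count t S x) \<and>
         fact (card S) * (\<Prod>i\<in>S. t i) * real (lattice_count t S x) \<le> (x + (\<Sum>i\<in>S. t i)) ^ card S"
  using assms
proof (induction S arbitrary: x rule: finite_induct)
  case empty
  have "lattice_set t {} x = {\<lambda>_. 0}" using empty by (auto simp: lattice_set_def)
  thus ?case by (simp add: lattice_count_eq_card)
next
  case (insert j S)
  let ?f = "\<lambda>x. real (lattice_count t (insert j S) x)"
  let ?g = "\<lambda>x. real (lattice_count t S x)"
  have "x ^ Suc (card S) \<le> real (Suc (card S)) * t j * (fact (card S) * prod t S) * ?f x \<and>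
        real (Suc (card S)) * t j * (fact (card S) * prod t S) * ?f x \<le> (x + sum t S + t j) ^ Suc (card S)"
  proof (rule power_bounds_strip_sum[where g = ?g])
    show "fact (card S) * prod t S > 0" "sum t S \<ge> 0"
      using insert by (auto intro!: mult_pos_pos prod_pos sum_nonneg simp: less_imp_le)
    show "?f y = ?g y + ?f (y - t j)" for y
      using lattice_count_remove[of "insert j S" t j y] insert by simp
    show "?f y = 0" if "y < 0" for y
      using lattice_set_empty_if_neg[OF insert.prems(1) that] by (simp add: lattice_count_eq_card)
  qed (use insert in auto)
  thus ?case using insert by (simp add: algebra_simps)
qed

lemma lattice_count_bigo:
  assumes "finite S" and pos: "\<forall>i\<in>S. t i > 0"
  shows "(\<lambda>x. real (lattice_count t S x)) \<in> O(\<lambda>x. x ^ card S)"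
proof -
  define K where "K = fact (card S) * (\<Prod>i\<in>S. t i)"
  define \<sigma> where "\<sigma> = sum t S"
  have K: "K > 0" unfolding K_def using pos by (intro mult_pos_pos prod_pos) auto
  have "(\<lambda>x. real (lattice_count t S x)) \<in> O(\<lambda>x. (x + \<sigma>) ^ card S)"
  proof (rule bigoI[where c = "1 / K"])
    show "\<forall>\<^sub>F x in at_top. norm (real (lattice_count t S x)) \<le> 1 / K * norm ((x + \<sigma>) ^ card S)"
      using eventually_ge_at_top[of 0]
    proof eventually_elim
      case (elim x)
      have "0 \<le> \<sigma>" unfolding \<sigma>_def using pos by (intro sum_nonneg) (simp add: less_imp_le)
      thus ?case using lattice_count_bounds[OF assms elim] K elim by (simp add: K_def \<sigma>_def field_simps)
    qed
  qed
  also have "(\<lambda>x. x + \<sigma>) \<in> O(\<lambda>x. x)" by real_asymp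
  hence "(\<lambda>x. (x + \<sigma>) ^ card S) \<in> O(\<lambda>x. x ^ card S)" by (rule landau_o.big_power)
  finally show ?thesis .
qed

lemma lattice_count_leading_coeff:
  assumes "finite S" and pos: "\<forall>i\<in>S. t i > 0"
    and expansion: "(\<lambda>x. real (lattice_count t S x) - P * x ^ card S) \<in> o(\<lambda>x. x ^ card S)"
  shows "P = 1 / (fact (card S) * (\<Prod>i\<in>S. t i))"
proof -
  define K where "K = fact (card S) * (\<Prod>i\<in>S. t i)"
  define \<sigma> where "\<sigma> = sum t S"
  have K: "K > 0" unfolding K_def using pos by (intro mult_pos_pos prod_pos) auto
  let ?q = "\<lambda>x. real (lattice_count t S x) / x ^ card S"
  have "((\<lambda>x. (real (lattice_count t S x) - P * x ^ card S) / x ^ card S + P) \<longlongrightarrow> 0 + P) at_top"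
    by (intro tendsto_add smalloD_tendsto[OF expansion] tendsto_const)
  moreover have "\<forall>\<^sub>F x in at_top. (real (lattice_count t S x) - P * x ^ card S) / x ^ card S + P = ?q x"
    using eventually_gt_at_top[of 0] by eventually_elim (simp add: field_simps)
  ultimately have "(?q \<longlongrightarrow> P) at_top" by (simp add: tendsto_cong)
  moreover have "(?q \<longlongrightarrow> 1 / K) at_top"
  proof (rule tendsto_sandwich[where f = "\<lambda>_. 1 / K"])
    have "((\<lambda>x. ((x + \<sigma>) / x) ^ card S) \<longlongrightarrow> 1) at_top" by real_asymp
    thus "((\<lambda>x. ((x + \<sigma>) / x) ^ card S / K) \<longlongrightarrow> 1 / K) at_top"
      by (intro tendsto_divide tendsto_const) (use K in auto)
    have bounds: "x ^ card S \<le> K * real (lattice_count t S x) \<and>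
        K * real (lattice_count t S x) \<le> (x + \<sigma>) ^ card S" if "x > 0" for x
      using lattice_count_bounds[OF assms(1,2)] that by (simp add: K_def \<sigma>_def)
    show "\<forall>\<^sub>F x in at_top. 1 / K \<le> ?q x"
      using eventually_gt_at_top[of 0] by eventually_elim (use bounds K in \<open>simp add: field_simps\<close>)
    show "\<forall>\<^sub>F x in at_top. ?q x \<le> ((x + \<sigma>) / x) ^ card S / K"
      using eventually_gt_at_top[of 0]
      by eventually_elim (use bounds K in \<open>simp add: field_simps power_divide\<close>)
  qed simp
  ultimately show ?thesis unfolding K_def using tendsto_unique[OF trivial_limit_at_top_linorder] by blast
qed

lemma smallo_power_compose:
  fixes f g :: "real \<Rightarrow> real"
  assumes "f \<in> o(\<lambda>x. x ^ k)" and "filterlim g at_top at_top" and "g \<in> O(\<lambda>x. x)"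
  shows "(\<lambda>x. f (g x)) \<in> o(\<lambda>x. x ^ k)"
proof -
  have "(\<lambda>x. f (g x)) \<in> o(\<lambda>x. g x ^ k)" using landau_o.small.compose[OF assms(1,2)] .
  also have "(\<lambda>x. g x ^ k) \<in> O(\<lambda>x. x ^ k)" using assms(3) by (rule landau_o.big_power)
  finally show ?thesis .
qed

lemma quartic_expansion_shift:
  fixes F :: "real \<Rightarrow> real"
  assumes "(\<lambda>x. F x - (P * x ^ 4 + R * x ^ 3)) \<in> o(\<lambda>x. x ^ 3)"
  shows "(\<lambda>x. F (x - h) - F x + 4 * P * h * x ^ 3) \<in> o(\<lambda>x. x ^ 3)"
proof -
  define G where "G x = F x - (P * x ^ 4 + R * x ^ 3)" for x
  have "(\<lambda>x. G (x - h)) \<in> o(\<lambda>x. x ^ 3)"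
    by (rule smallo_power_compose[OF assms[folded G_def]]) real_asymp+
  hence "(\<lambda>x. G (x - h) - G x) \<in> o(\<lambda>x. x ^ 3)"
    using assms[folded G_def] by (rule sum_in_smallo)
  moreover have "(\<lambda>x. P * ((x - h) ^ 4 - x ^ 4) + 4 * P * h * x ^ 3 + R * ((x - h) ^ 3 - x ^ 3))
      \<in> o(\<lambda>x. x ^ 3)" by real_asymp
  ultimately have "(\<lambda>x. G (x - h) - G x + (P * ((x - h) ^ 4 - x ^ 4) + 4 * P * h * x ^ 3
      + R * ((x - h) ^ 3 - x ^ 3))) \<in> o(\<lambda>x. x ^ 3)"
    by (rule sum_in_smallo)
  thus ?thesis by (simp add: G_def algebra_simps)
qed

lemma lattice_count_quartic_shift:
  assumes "finite S" and pos: "\<forall>i\<in>S. t i > 0" and "card S = 4"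
    and expansion: "(\<lambda>x. real (lattice_count t S x) - (P * x ^ 4 + R * x ^ 3)) \<in> o(\<lambda>x. x ^ 3)"
  shows "(\<lambda>x. real (lattice_count t S (x - h)) - real (lattice_count t S x) + h * x ^ 3 / (6 * prod t S))
    \<in> o(\<lambda>x. x ^ 3)"
proof -
  have "(\<lambda>x::real. x ^ 3) \<in> o(\<lambda>x. x ^ 4)" by real_asymp
  with expansion have "(\<lambda>x. real (lattice_count t S x) - (P * x ^ 4 + R * x ^ 3)) \<in> o(\<lambda>x. x ^ 4)"
    by (rule landau_o.small_trans)
  moreover have "(\<lambda>x::real. R * x ^ 3) \<in> o(\<lambda>x. x ^ 4)" by real_asymp
  ultimately have "(\<lambda>x. (real (lattice_count t S x) - (P * x ^ 4 + R * x ^ 3)) + R * x ^ 3) \<in> o(\<lambda>x. x ^ 4)"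
    by (rule sum_in_smallo)
  hence "(\<lambda>x. real (lattice_count t S x) - P * x ^ card S) \<in> o(\<lambda>x. x ^ card S)"
    using \<open>card S = 4\<close> by (simp add: algebra_simps)
  hence "P = 1 / (24 * prod t S)"
    using lattice_count_leading_coeff[OF assms(1,2)] \<open>card S = 4\<close> by (simp add: fact_numeral)
  with quartic_expansion_shift[OF expansion, of h] show ?thesis by (simp add: field_simps)
qed

lemma lattice_count_half_shift:
  assumes "finite S" and "\<forall>i\<in>S. t i > 0" and "card S = 4"
    and "\<exists>P R. (\<lambda>x. real (lattice_count t S x) - (P * x ^ 4 + R * x ^ 3)) \<in> o(\<lambda>x. x ^ 3)"
  shows "(\<lambda>T. real (lattice_count t S ((T - c) / 2 - c / 2)) - real (lattice_count t S ((T - c) / 2))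
    + c * ((T - c) / 2) ^ 3 / (12 * prod t S)) \<in> o(\<lambda>T. T ^ 3)"
proof -
  obtain P R where "(\<lambda>x. real (lattice_count t S x) - (P * x ^ 4 + R * x ^ 3)) \<in> o(\<lambda>x. x ^ 3)"
    using assms(4) by blast
  from lattice_count_quartic_shift[OF assms(1-3) this, of "c / 2"]
  have "(\<lambda>T. real (lattice_count t S ((T - c) / 2 - c / 2)) - real (lattice_count t S ((T - c) / 2))
      + c / 2 * ((T - c) / 2) ^ 3 / (6 * prod t S)) \<in> o(\<lambda>T. T ^ 3)"
    by (rule smallo_power_compose[where g = "\<lambda>T. (T - c) / 2"]) real_asymp+
  thus ?thesis by simp
qed

lemma lattice_count_smallo_compose:
  assumes "finite S" and "\<forall>i\<in>S. t i > 0" and "card S < k"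
    and "filterlim g at_top at_top" and "g \<in> O(\<lambda>x. x)"
  shows "(\<lambda>x. real (lattice_count t S (g x))) \<in> o(\<lambda>x. x ^ k)"
proof (rule smallo_power_compose[OF _ assms(4,5)])
  have "(\<lambda>_. 1) \<in> o(\<lambda>x::real. x)" by real_asymp
  hence "(\<lambda>x::real. x ^ card S) \<in> o(\<lambda>x. x ^ k)"
    using assms(3) by (rule landau_o.small_power_increasing)
  with lattice_count_bigo[OF assms(1,2)] show "(\<lambda>x. real (lattice_count t S x)) \<in> o(\<lambda>x. x ^ k)"
    by (rule landau_o.big_small_trans)
qed

section \<open>Walks on a metric graph\<close>

inductive_set walks :: "'e set \<Rightarrow> ('e \<Rightarrow> 'v \<times> 'v) \<Rightarrow> 'v \<Rightarrow> ('v \<times> ('e \<Rightarrow> nat)) set"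
  for E ep A where
  start: "(A, \<lambda>_. 0) \<in> walks E ep A"
| step: "(u, n) \<in> walks E ep A \<Longrightarrow> e \<in> incident E ep u
    \<Longrightarrow> (other_end ep e u, n(e := Suc (n e))) \<in> walks E ep A"

definition walk_time :: "'e set \<Rightarrow> ('e \<Rightarrow> real) \<Rightarrow> ('e \<Rightarrow> nat) \<Rightarrow> real" where
  "walk_time E len n = (\<Sum>e\<in>E. len e * real (n e))"

lemma incident_iff: "e \<in> incident E ep u \<longleftrightarrow> e \<in> E \<and> u \<in> {fst (ep e), snd (ep e)}"
  by (auto simp: incident_def)

lemma other_end_other_end: "e \<in> incident E ep u \<Longrightarrow> other_end ep e (other_end ep e u) = u"
  by (auto simp: incident_def other_end_def)

lemma incident_other_end: "e \<in> incident E ep u \<Longrightarrow> e \<in> incident E ep (other_end ep e u)"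
  by (auto simp: incident_def other_end_def)

lemma walk_time_step:
  assumes "finite E" "e \<in> E"
  shows "walk_time E len (n(e := Suc (n e))) = walk_time E len n + len e"
proof -
  have "(\<Sum>i\<in>E - {e}. len i * real ((n(e := Suc (n e))) i)) = (\<Sum>i\<in>E - {e}. len i * real (n i))"
    by (intro sum.cong) auto
  thus ?thesis using assms by (simp add: walk_time_def sum.remove algebra_simps)
qed

definition supported :: "'a set \<Rightarrow> ('a \<Rightarrow> nat) \<Rightarrow> bool" where
  "supported E n \<longleftrightarrow> (\<forall>i. i \<notin> E \<longrightarrow> n i = 0)"

lemma supported_upd [simp]: "i \<in> E \<Longrightarrow> supported E (n(i := k)) \<longleftrightarrow> supported E n"
  by (auto simp: supported_def)

lemma supported_zero [simp]: "supported E (\<lambda>_. 0)"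
  by (simp add: supported_def)

lemma walks_supported: "(u, n) \<in> walks E ep A \<Longrightarrow> supported E n"
  by (induction rule: walks.induct) (auto simp: supported_def incident_def)

lemma moving_iff_walks:
  assumes "finite E"
  shows "(e, u, s) \<in> moving E ep len A \<longleftrightarrow>
    (\<exists>n. (u, n) \<in> walks E ep A \<and> e \<in> incident E ep u \<and> s = walk_time E len n)"
proof
  assume "(e, u, s) \<in> moving E ep len A"
  thus "\<exists>n. (u, n) \<in> walks E ep A \<and> e \<in> incident E ep u \<and> s = walk_time E len n"
  proof (induction rule: moving.induct)
    case (start e)
    show ?case
      using walks.start start by (intro exI[of _ "\<lambda>_. 0"]) (simp add: walk_time_def)
  next
    case (step e u s e')
    from step.IH obtain n where n: "(u, n) \<in> walks E ep A" "e \<in> incident E ep u" "s = walk_time E len n"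
      by auto
    have "e \<in> E" using n(2) by (simp add: incident_def)
    show ?case
    proof (intro exI conjI)
      show "(other_end ep e u, n(e := Suc (n e))) \<in> walks E ep A" using n(1,2) by (rule walks.step)
      show "s + len e = walk_time E len (n(e := Suc (n e)))"
        using walk_time_step[OF assms \<open>e \<in> E\<close>] n(3) by simp
    qed (rule step.hyps(2))
  qed
next
  assume "\<exists>n. (u, n) \<in> walks E ep A \<and> e \<in> incident E ep u \<and> s = walk_time E len n"
  then obtain n where n: "(u, n) \<in> walks E ep A" "e \<in> incident E ep u" "s = walk_time E len n"
    by blast
  have "\<forall>e \<in> incident E ep u. (e, u, walk_time E len n) \<in> moving E ep len A"
    using n(1)
  proof (induction rule: walks.induct)
    case start
    show ?case by (simp add: walk_time_def moving.start)
  next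
    case (step u n e)
    have "e \<in> E" using step.hyps(2) by (simp add: incident_def)
    have "(e', other_end ep e u, walk_time E len n + len e) \<in> moving E ep len A"
      if "e' \<in> incident E ep (other_end ep e u)" for e'
      using moving.step[OF step.IH[rule_format, OF step.hyps(2)] that] .
    thus ?case unfolding walk_time_step[OF assms \<open>e \<in> E\<close>] by auto
  qed
  thus "(e, u, s) \<in> moving E ep len A" using n by blast
qed

lemma walks_if_retractable:
  assumes "finite E"
    and zero: "\<And>u. P u (\<lambda>_. 0) \<Longrightarrow> u = A"
    and retract: "\<And>u n. P u n \<Longrightarrow> n \<noteq> (\<lambda>_. 0) \<Longrightarrow>
      \<exists>e \<in> incident E ep u. n e \<noteq> 0 \<and> P (other_end ep e u) (n(e := n e - 1))"
  shows "P u n \<Longrightarrow> (u, n) \<in> walks E ep A"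
proof (induction "sum n E" arbitrary: u n rule: less_induct)
  case less
  show ?case
  proof (cases "n = (\<lambda>_. 0)")
    case True
    thus ?thesis using zero[of u] less.prems walks.start by simp
  next
    case False
    then obtain e where e: "e \<in> incident E ep u" "n e \<noteq> 0"
      and P: "P (other_end ep e u) (n(e := n e - 1))"
      using retract[OF less.prems False] by auto
    have "e \<in> E" using e(1) by (simp add: incident_def)
    have "sum (n(e := n e - 1)) (E - {e}) = sum n (E - {e})" by (intro sum.cong) auto
    hence "sum (n(e := n e - 1)) E < sum n E"
      using e(2) \<open>finite E\<close> \<open>e \<in> E\<close> by (simp add: sum.remove)
    hence "(other_end ep e u, n(e := n e - 1)) \<in> walks E ep A" using P by (rule less.hyps)
    from walks.step[OF this incident_other_end[OF e(1)]]
    show ?thesis using e by (simp add: other_end_other_end)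
  qed
qed

definition reached :: "'e set \<Rightarrow> ('e \<Rightarrow> 'v \<times> 'v) \<Rightarrow> ('e \<Rightarrow> real) \<Rightarrow> 'v \<Rightarrow> real \<Rightarrow> 'v
    \<Rightarrow> ('e \<Rightarrow> nat) set" where
  "reached E ep len A T u = {n. (u, n) \<in> walks E ep A \<and> walk_time E len n \<le> T}"

definition in_flight :: "'e set \<Rightarrow> ('e \<Rightarrow> 'v \<times> 'v) \<Rightarrow> ('e \<Rightarrow> real) \<Rightarrow> 'v \<Rightarrow> real \<Rightarrow> 'e \<Rightarrow> 'v
    \<Rightarrow> ('e \<Rightarrow> nat) set" where
  "in_flight E ep len A T e u = {n \<in> reached E ep len A T u. T < walk_time E len n + len e}"

definition reached_not_via :: "'e set \<Rightarrow> ('e \<Rightarrow> 'v \<times> 'v) \<Rightarrow> ('e \<Rightarrow> real) \<Rightarrow> 'v \<Rightarrow> real \<Rightarrow> 'e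
    \<Rightarrow> 'v \<Rightarrow> ('e \<Rightarrow> nat) set" where
  "reached_not_via E ep len A T e u = {m \<in> reached E ep len A T (other_end ep e u).
     \<not> (m e \<noteq> 0 \<and> (u, m(e := m e - 1)) \<in> walks E ep A)}"

lemma finite_reached:
  assumes "finite E" "\<forall>e\<in>E. len e > 0"
  shows "finite (reached E ep len A T u)"
proof (rule finite_subset[OF _ finite_lattice_set[OF assms]])
  show "reached E ep len A T u \<subseteq> lattice_set len E T"
    by (auto simp: reached_def lattice_set_def walk_time_def supported_def dest!: walks_supported)
qed

lemma card_in_flight:
  assumes "finite E" and pos: "\<forall>e\<in>E. len e > 0" and e: "e \<in> incident E ep u"
  shows "real (card (in_flight E ep len A T e u)) = real (card (reached E ep len A T u))
    - real (card (reached E ep len A T (other_end ep e u))) + real (card (reached_not_via E ep len A T e u))"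
proof -
  define w where "w = other_end ep e u"
  let ?R = "reached E ep len A T" and ?W = "walk_time E len"
  define early where "early = {n \<in> ?R u. ?W n + len e \<le> T}"
  define via where "via = {m \<in> ?R w. m e \<noteq> 0 \<and> (u, m(e := m e - 1)) \<in> walks E ep A}"
  have "e \<in> E" using e by (simp add: incident_def)
  have "bij_betw (\<lambda>n. n(e := Suc (n e))) early via"
  proof (rule bij_betw_byWitness[where f' = "\<lambda>m. m(e := m e - 1)"])
    show "(\<lambda>n. n(e := Suc (n e))) ` early \<subseteq> via"
      using walks.step[OF _ e] walk_time_step[OF \<open>finite E\<close> \<open>e \<in> E\<close>]
      by (auto simp: early_def via_def reached_def w_def)
    show "(\<lambda>m. m(e := m e - 1)) ` via \<subseteq> early"
    proof safe
      fix m assume "m \<in> via"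
      moreover have "(m(e := m e - 1))(e := Suc ((m(e := m e - 1)) e)) = m" if "m e \<noteq> 0"
        using that by auto
      ultimately show "m(e := m e - 1) \<in> early"
        using walk_time_step[OF \<open>finite E\<close> \<open>e \<in> E\<close>, of len "m(e := m e - 1)"] pos \<open>e \<in> E\<close>
        by (fastforce simp: early_def via_def reached_def)
    qed
  qed (auto simp: via_def)
  hence card_eq: "card early = card via" by (rule bij_betw_same_card)
  have sub: "early \<subseteq> ?R u" "via \<subseteq> ?R w" by (auto simp: early_def via_def)
  have fin: "finite (?R u)" "finite (?R w)" by (simp_all add: finite_reached[OF \<open>finite E\<close> pos])
  have "in_flight E ep len A T e u = ?R u - early"
    "reached_not_via E ep len A T e u = ?R w - via"
    by (auto simp: in_flight_def early_def reached_not_via_def via_def w_def)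
  hence "card (in_flight E ep len A T e u) = card (?R u) - card early"
    "card (reached_not_via E ep len A T e u) = card (?R w) - card via"
    using card_Diff_subset[OF finite_subset[OF sub(1) fin(1)] sub(1)]
      card_Diff_subset[OF finite_subset[OF sub(2) fin(2)] sub(2)] by simp_all
  moreover have "card early \<le> card (?R u)" "card via \<le> card (?R w)"
    using card_mono[OF fin(1) sub(1)] card_mono[OF fin(2) sub(2)] .
  ultimately show ?thesis using card_eq by (simp add: of_nat_diff w_def)
qed

lemma num_points_eq_sum_in_flight:
  assumes "finite E" and pos: "\<forall>e\<in>E. len e > 0"
    and inj: "inj_on (walk_time E len) {n. supported E n}"
  shows "num_points E ep len A T =
    (\<Sum>e\<in>E. \<Sum>u\<in>{fst (ep e), snd (ep e)}. card (in_flight E ep len A T e u))"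
proof -
  define M where "M = (SIGMA e:E. SIGMA u:{fst (ep e), snd (ep e)}. in_flight E ep len A T e u)"
  let ?f = "\<lambda>(e, u, n). (e, u, walk_time E len n)"
  have "(e, u, s) \<in> moving E ep len A \<and> s \<le> T \<and> T < s + len e \<longleftrightarrow>
      (\<exists>n. (e, u, n) \<in> M \<and> s = walk_time E len n)" for e u s
    by (auto simp: M_def moving_iff_walks[OF \<open>finite E\<close>] in_flight_def reached_def incident_iff)
  hence "{(e, u, s). (e, u, s) \<in> moving E ep len A \<and> s \<le> T \<and> T < s + len e} = ?f ` M"
    by (auto simp: image_iff) force
  moreover have "inj_on ?f M"
  proof (rule inj_onI)
    fix x y assume "x \<in> M" "y \<in> M" "?f x = ?f y"
    then obtain e u n n' where xy: "x = (e, u, n)" "y = (e, u, n')"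
      and walks: "(u, n) \<in> walks E ep A" "(u, n') \<in> walks E ep A"
      and "walk_time E len n = walk_time E len n'"
      by (auto simp: M_def in_flight_def reached_def)
    moreover have "n = n'"
      using inj_onD[OF inj, of n n'] \<open>walk_time E len n = walk_time E len n'\<close>
        walks_supported[OF walks(1)] walks_supported[OF walks(2)] by auto
    ultimately show "x = y" by simp
  qed
  moreover have "card M = (\<Sum>e\<in>E. \<Sum>u\<in>{fst (ep e), snd (ep e)}. card (in_flight E ep len A T e u))"
  proof -
    have "finite (in_flight E ep len A T e u)" for e u
      unfolding in_flight_def by (rule finite_subset[OF _ finite_reached[OF \<open>finite E\<close> pos]]) auto
    thus ?thesis unfolding M_def using \<open>finite E\<close> by (simp add: card_SigmaI)
  qed
  ultimately show ?thesis by (simp add: num_points_def card_image)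
qed

text \<open>Summed over both ends of each edge, the counts of reached states in \<open>card_in_flight\<close> cancel.\<close>
lemma num_points_eq_sum_not_via:
  assumes "finite E" and pos: "\<forall>e\<in>E. len e > 0"
    and inj: "inj_on (walk_time E len) {n. supported E n}"
  shows "num_points E ep len A T =
    (\<Sum>e\<in>E. \<Sum>u\<in>{fst (ep e), snd (ep e)}. card (reached_not_via E ep len A T e u))"
proof -
  let ?C = "\<lambda>u. real (card (reached E ep len A T u))"
  let ?I = "\<lambda>e u. real (card (in_flight E ep len A T e u))"
  let ?D = "\<lambda>e u. real (card (reached_not_via E ep len A T e u))"
  have "(\<Sum>u\<in>{fst (ep e), snd (ep e)}. ?I e u) = (\<Sum>u\<in>{fst (ep e), snd (ep e)}. ?D e u)"
    if "e \<in> E" for e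
  proof -
    have "(\<Sum>u\<in>{fst (ep e), snd (ep e)}. ?I e u) =
      (\<Sum>u\<in>{fst (ep e), snd (ep e)}. (?C u - ?C (other_end ep e u)) + ?D e u)"
      using that by (intro sum.cong refl card_in_flight[OF assms(1,2)]) (simp add: incident_iff)
    moreover have "(\<Sum>u\<in>{fst (ep e), snd (ep e)}. ?C u - ?C (other_end ep e u)) = 0"
      by (cases "fst (ep e) = snd (ep e)") (simp_all add: other_end_def)
    ultimately show ?thesis by (simp only: sum.distrib)
  qed
  hence "real (num_points E ep len A T) = (\<Sum>e\<in>E. \<Sum>u\<in>{fst (ep e), snd (ep e)}. ?D e u)"
    unfolding num_points_eq_sum_in_flight[OF assms] of_nat_sum by (rule sum.cong[OF refl])
  thus ?thesis by (simp only: of_nat_sum[symmetric] of_nat_eq_iff)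
qed

definition rat_independent :: "'a set \<Rightarrow> ('a \<Rightarrow> real) \<Rightarrow> bool" where
  "rat_independent E t \<longleftrightarrow> (\<forall>q :: 'a \<Rightarrow> rat. (\<Sum>i\<in>E. of_rat (q i) * t i) = 0 \<longrightarrow> (\<forall>i\<in>E. q i = 0))"

lemma inj_on_walk_time:
  assumes "finite E" and "rat_independent E len"
  shows "inj_on (walk_time E len) {n. supported E n}"
proof (rule inj_onI)
  fix n n' assume n: "n \<in> {n. supported E n}" "n' \<in> {n. supported E n}"
    and eq: "walk_time E len n = walk_time E len n'"
  define q :: "'a \<Rightarrow> rat" where "q i = of_nat (n i) - of_nat (n' i)" for i
  have "(\<Sum>i\<in>E. of_rat (q i) * len i) = walk_time E len n - walk_time E len n'"
    by (simp add: q_def walk_time_def of_rat_diff sum_subtractf[symmetric] algebra_simps)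
  hence "\<forall>i\<in>E. q i = 0" using assms(2) eq by (simp add: rat_independent_def)
  thus "n = n'" using n by (auto simp: q_def supported_def fun_eq_iff)
qed

lemma rat_independent_comp:
  assumes "\<sigma> permutes E" and "rat_independent E t"
  shows "rat_independent E (t \<circ> \<sigma>)"
  unfolding rat_independent_def
proof (intro allI impI)
  fix q :: "'a \<Rightarrow> rat" assume "(\<Sum>i\<in>E. of_rat (q i) * (t \<circ> \<sigma>) i) = 0"
  moreover have "(\<Sum>i\<in>E. of_rat ((q \<circ> inv \<sigma>) i) * t i) = (\<Sum>i\<in>E. of_rat (q i) * (t \<circ> \<sigma>) i)"
    using sum.permute[OF assms(1), of "\<lambda>i. of_rat ((q \<circ> inv \<sigma>) i) * t i"]
      permutes_inverses(2)[OF assms(1)] by simp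
  ultimately have "\<forall>i\<in>E. q (inv \<sigma> i) = 0" using assms(2) unfolding rat_independent_def by force
  thus "\<forall>i\<in>E. q i = 0"
    using assms(1) by (metis permutes_in_image permutes_inverses(2))
qed

lemma incident_comp: "incident (\<sigma> -` E) (ep \<circ> \<sigma>) u = \<sigma> -` incident E ep u"
  by (auto simp: incident_def)

lemma other_end_comp: "other_end (ep \<circ> \<sigma>) e u = other_end ep (\<sigma> e) u"
  by (simp add: other_end_def)

lemma moving_comp:
  assumes "bij \<sigma>"
  shows "(e, u, s) \<in> moving (\<sigma> -` E) (ep \<circ> \<sigma>) (len \<circ> \<sigma>) A \<longleftrightarrow> (\<sigma> e, u, s) \<in> moving E ep len A"
proof
  assume "(e, u, s) \<in> moving (\<sigma> -` E) (ep \<circ> \<sigma>) (len \<circ> \<sigma>) A"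
  thus "(\<sigma> e, u, s) \<in> moving E ep len A"
  proof (induction rule: moving.induct)
    case (start e)
    thus ?case by (intro moving.start) (auto simp: incident_def)
  next
    case (step e u s e')
    have "\<sigma> e' \<in> incident E ep (other_end ep (\<sigma> e) u)"
      using step.hyps(2) unfolding incident_comp other_end_comp by simp
    from moving.step[OF step.IH this] show ?case by (simp add: other_end_comp)
  qed
next
  have right_inv: "\<sigma> (inv \<sigma> e) = e" for e using assms by (simp add: bij_is_surj surj_f_inv_f)
  have "(inv \<sigma> e, u, s) \<in> moving (\<sigma> -` E) (ep \<circ> \<sigma>) (len \<circ> \<sigma>) A"
    if "(e, u, s) \<in> moving E ep len A" for e u s
    using that
  proof (induction rule: moving.induct)
    case (start e)
    thus ?case by (intro moving.start) (auto simp: incident_def right_inv)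
  next
    case (step e u s e')
    have "inv \<sigma> e' \<in> incident (\<sigma> -` E) (ep \<circ> \<sigma>) (other_end (ep \<circ> \<sigma>) (inv \<sigma> e) u)"
      using step.hyps(2) unfolding incident_comp other_end_comp by (simp add: right_inv)
    moreover have "other_end (ep \<circ> \<sigma>) (inv \<sigma> e) u = other_end ep e u" "(len \<circ> \<sigma>) (inv \<sigma> e) = len e"
      by (simp_all add: other_end_comp right_inv)
    ultimately show ?case using moving.step[OF step.IH] by metis
  qed
  moreover assume "(\<sigma> e, u, s) \<in> moving E ep len A"
  moreover have "inv \<sigma> (\<sigma> e) = e" using assms by (simp add: bij_is_inj)
  ultimately show "(e, u, s) \<in> moving (\<sigma> -` E) (ep \<circ> \<sigma>) (len \<circ> \<sigma>) A" by metis
qed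

lemma num_points_comp:
  assumes "bij \<sigma>"
  shows "num_points (\<sigma> -` E) (ep \<circ> \<sigma>) (len \<circ> \<sigma>) A T = num_points E ep len A T"
proof -
  let ?f = "\<lambda>(e, u, s). (\<sigma> e, u, s)"
  define P where "P = {(e, u, s). (e, u, s) \<in> moving E ep len A \<and> s \<le> T \<and> T < s + len e}"
  define P' where "P' = {(e, u, s). (e, u, s) \<in> moving (\<sigma> -` E) (ep \<circ> \<sigma>) (len \<circ> \<sigma>) A \<and> s \<le> T
    \<and> T < s + (len \<circ> \<sigma>) e}"
  have "bij_betw ?f P' P"
  proof (rule bij_betw_byWitness[where f' = "\<lambda>(e, u, s). (inv \<sigma> e, u, s)"])
    have right_inv: "\<sigma> (inv \<sigma> e) = e" for e using assms by (simp add: bij_is_surj surj_f_inv_f)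
    have left_inv: "inv \<sigma> (\<sigma> e) = e" for e using assms by (simp add: bij_is_inj)
    show "\<forall>x\<in>P'. (\<lambda>(e, u, s). (inv \<sigma> e, u, s)) (?f x) = x" by (auto simp: left_inv)
    show "\<forall>x\<in>P. ?f ((\<lambda>(e, u, s). (inv \<sigma> e, u, s)) x) = x" by (auto simp: right_inv)
    show "?f ` P' \<subseteq> P" by (auto simp: P_def P'_def moving_comp[OF assms])
    show "(\<lambda>(e, u, s). (inv \<sigma> e, u, s)) ` P \<subseteq> P'"
      by (auto simp: P_def P'_def moving_comp[OF assms] right_inv)
  qed
  thus ?thesis unfolding num_points_def P_def[symmetric] P'_def[symmetric] by (rule bij_betw_same_card)
qed

definition shifted_lattice :: "nat set \<Rightarrow> (nat \<Rightarrow> real) \<Rightarrow> nat set \<Rightarrow> (nat \<Rightarrow> nat) \<Rightarrow> real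
    \<Rightarrow> (nat \<Rightarrow> nat) set" where
  "shifted_lattice E t S c T = {m. (\<forall>i\<in>S. c i \<le> m i \<and> even (m i - c i)) \<and> (\<forall>i. i \<notin> S \<longrightarrow> m i = c i)
     \<and> walk_time E t m \<le> T}"

lemma card_shifted_lattice:
  assumes "finite E" "S \<subseteq> E"
  shows "card (shifted_lattice E t S c T) = lattice_count t S ((T - walk_time E t c) / 2)"
proof -
  let ?L = "lattice_set t S ((T - walk_time E t c) / 2)"
  have time: "walk_time E t (\<lambda>i. c i + 2 * k i) = walk_time E t c + 2 * (\<Sum>i\<in>S. t i * real (k i))"
    if "\<forall>i. i \<notin> S \<longrightarrow> k i = 0" for k
  proof -
    have "(\<Sum>i\<in>E. t i * real (k i)) = (\<Sum>i\<in>S. t i * real (k i))"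
      using assms(1,2) that by (intro sum.mono_neutral_right) auto
    moreover have "walk_time E t (\<lambda>i. c i + 2 * k i) = walk_time E t c + 2 * (\<Sum>i\<in>E. t i * real (k i))"
      unfolding walk_time_def by (simp add: distrib_left sum.distrib sum_distrib_left mult_ac)
    ultimately show ?thesis by simp
  qed
  have recover: "c i + 2 * ((m i - c i) div 2) = m i" if "m \<in> shifted_lattice E t S c T" for m i
  proof (cases "i \<in> S")
    case True
    hence "c i \<le> m i" "even (m i - c i)" using that by (simp_all add: shifted_lattice_def)
    thus ?thesis by simp
  next
    case False
    thus ?thesis using that by (simp add: shifted_lattice_def)
  qed
  have "bij_betw (\<lambda>k i. c i + 2 * k i) ?L (shifted_lattice E t S c T)"
  proof (rule bij_betw_byWitness[where f' = "\<lambda>m i. (m i - c i) div 2"])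
    show "\<forall>m\<in>shifted_lattice E t S c T. (\<lambda>i. c i + 2 * ((m i - c i) div 2)) = m"
      using recover by blast
    show "(\<lambda>k i. c i + 2 * k i) ` ?L \<subseteq> shifted_lattice E t S c T"
      using time by (auto simp: shifted_lattice_def lattice_set_def)
    show "(\<lambda>m i. (m i - c i) div 2) ` shifted_lattice E t S c T \<subseteq> ?L"
    proof safe
      fix m assume m: "m \<in> shifted_lattice E t S c T"
      let ?k = "\<lambda>i. (m i - c i) div 2"
      have k0: "\<forall>i. i \<notin> S \<longrightarrow> ?k i = 0" using m by (simp add: shifted_lattice_def)
      have "walk_time E t m \<le> T" using m by (simp add: shifted_lattice_def)
      hence "walk_time E t (\<lambda>i. c i + 2 * ?k i) \<le> T" using recover[OF m] by simp
      thus "?k \<in> ?L" using time[OF k0] k0 by (simp add: lattice_set_def)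
    qed
  qed (simp add: fun_eq_iff)
  thus ?thesis by (simp add: bij_betw_same_card lattice_count_eq_card)
qed

lemma finite_shifted_lattice:
  assumes "finite E" "\<forall>i\<in>E. t i > 0" "S \<subseteq> E" "supported E c"
  shows "finite (shifted_lattice E t S c T)"
proof (rule finite_subset[OF _ finite_lattice_set[OF assms(1,2), of T]])
  show "shifted_lattice E t S c T \<subseteq> lattice_set t E T"
    using assms(3,4) by (auto simp: shifted_lattice_def lattice_set_def walk_time_def supported_def)
qed

lemma card_shifted_lattice_Un:
  assumes "finite E" "\<forall>i\<in>E. t i > 0" "S\<^sub>1 \<subseteq> E" "S\<^sub>2 \<subseteq> E" "supported E c\<^sub>1" "supported E c\<^sub>2"
    and "i \<in> S\<^sub>1" "i \<notin> S\<^sub>2" "c\<^sub>2 i < c\<^sub>1 i"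
  shows "card (shifted_lattice E t S\<^sub>1 c\<^sub>1 T \<union> shifted_lattice E t S\<^sub>2 c\<^sub>2 T) =
    lattice_count t S\<^sub>1 ((T - walk_time E t c\<^sub>1) / 2) + lattice_count t S\<^sub>2 ((T - walk_time E t c\<^sub>2) / 2)"
proof -
  have "shifted_lattice E t S\<^sub>1 c\<^sub>1 T \<inter> shifted_lattice E t S\<^sub>2 c\<^sub>2 T = {}"
    using assms(7-9) by (auto simp: shifted_lattice_def)
  thus ?thesis using assms
    by (simp add: card_Un_disjoint finite_shifted_lattice card_shifted_lattice)
qed

section \<open>The H-junction\<close>

lemma atLeastAtMost_1_5: "{1..5::nat} = {1, 2, 3, 4, 5}"
  by auto

lemma ball_1_5: "(\<forall>i\<in>{1..5::nat}. P i) \<longleftrightarrow> P 1 \<and> P 2 \<and> P 3 \<and> P 4 \<and> P 5"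
  unfolding atLeastAtMost_1_5 by blast

lemma mem_H_edges: "i \<in> H_edges \<longleftrightarrow> 1 \<le> i \<and> i \<le> 5"
  by (simp add: H_edges_def)

lemma sum_H_edges: "(\<Sum>e\<in>H_edges. f e) = f 1 + f 2 + f 3 + f 4 + f 5"
  unfolding H_edges_def atLeastAtMost_1_5 by (simp add: ac_simps)

lemma walk_time_H: "walk_time H_edges t m = t 1 * m 1 + t 2 * m 2 + t 3 * m 3 + t 4 * m 4 + t 5 * m 5"
  unfolding walk_time_def H_edges_def atLeastAtMost_1_5 by (simp add: algebra_simps)

lemma H_incident:
  "incident H_edges H_ends u =
    (if u = 0 then {1, 2, 3} else if u = 1 then {3, 4, 5} else if u = 2 then {1}
     else if u = 3 then {2} else if u = 4 then {4} else if u = 5 then {5} else {})"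
  unfolding incident_def H_edges_def atLeastAtMost_1_5 by (auto simp: H_ends_def)

lemma H_incident_cases:
  assumes "e \<in> incident H_edges H_ends u"
  obtains "u = 0" "e = 1" | "u = 0" "e = 2" | "u = 0" "e = 3" | "u = 1" "e = 3" | "u = 1" "e = 4"
    | "u = 1" "e = 5" | "u = 2" "e = 1" | "u = 3" "e = 2" | "u = 4" "e = 4" | "u = 5" "e = 5"
  using assms that by (auto simp: H_incident split: if_splits)

lemma H_incident_edge: "e \<in> incident H_edges H_ends u \<Longrightarrow> e \<in> {1..5}"
  by (simp add: incident_def H_edges_def)

definition H_path :: "nat \<Rightarrow> nat set" where
  "H_path u = (if u = 0 then {} else if u = 1 then {3} else if u = 2 then {1} else if u = 3 then {2}
     else if u = 4 then {3, 4} else {3, 5})"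

lemma H_path_other_end:
  assumes "e \<in> incident H_edges H_ends u"
  shows "i \<in> H_path (other_end H_ends e u) \<longleftrightarrow> (i \<in> H_path u \<longleftrightarrow> i \<noteq> e)"
  using assms by (cases rule: H_incident_cases) (auto simp: other_end_def H_ends_def H_path_def)

text \<open>These are exactly the reachable states (\<open>walks_H_iff\<close>): in a tree an edge is used an odd number
  of times iff it separates \<open>A\<close> from the end vertex, and the edges used by a walk form a subtree
  containing \<open>A\<close>.\<close>
definition H_state :: "nat \<Rightarrow> (nat \<Rightarrow> nat) \<Rightarrow> bool" where
  "H_state u n \<longleftrightarrow> u \<le> 5 \<and> supported {1..5} n \<and>
     (\<forall>i\<in>{1..5}. odd (n i) \<longleftrightarrow> i \<in> H_path u) \<and> (n 3 = 0 \<longrightarrow> n 4 = 0 \<and> n 5 = 0)"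

lemma H_state_odd:
  assumes "H_state u n" and "i \<in> H_path u"
  shows "odd (n i)"
proof -
  have "i \<in> {1..5}" using assms(2) by (auto simp: H_path_def split: if_splits)
  thus ?thesis using assms unfolding H_state_def by simp
qed

lemma H_state_step:
  assumes st: "H_state u n" and e: "e \<in> incident H_edges H_ends u"
  shows "H_state (other_end H_ends e u) (n(e := Suc (n e)))"
proof -
  have "other_end H_ends e u \<le> 5" "e \<in> {4, 5} \<Longrightarrow> 3 \<in> H_path u"
    using e by (cases rule: H_incident_cases; simp add: other_end_def H_ends_def H_path_def)+
  moreover have "n 3 \<noteq> 0" if "3 \<in> H_path u"
    using H_state_odd[OF st that] by (metis even_zero)
  ultimately show ?thesis using st H_path_other_end[OF e] H_incident_edge[OF e]
    unfolding H_state_def by auto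
qed

lemma H_state_retract_along:
  assumes st: "H_state u n" and e: "e \<in> incident H_edges H_ends u" and "n e \<noteq> 0"
    and "(n(e := n e - 1)) 3 = 0 \<longrightarrow> (n(e := n e - 1)) 4 = 0 \<and> (n(e := n e - 1)) 5 = 0"
  shows "H_state (other_end H_ends e u) (n(e := n e - 1))"
proof -
  have "other_end H_ends e u \<le> 5"
    using e by (cases rule: H_incident_cases) (simp_all add: other_end_def H_ends_def)
  moreover have "odd (n e - 1) \<longleftrightarrow> \<not> odd (n e)" using \<open>n e \<noteq> 0\<close> by (cases "n e") auto
  ultimately show ?thesis using assms H_path_other_end[OF e] H_incident_edge[OF e]
    unfolding H_state_def by auto
qed

lemma H_state_zero:
  assumes "H_state u (\<lambda>_. 0)"
  shows "u = 0"
proof (rule ccontr)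
  assume "u \<noteq> 0"
  hence "H_path u \<noteq> {}" by (simp add: H_path_def)
  then obtain i where "i \<in> H_path u" by blast
  with H_state_odd[OF assms this] show False by simp
qed

text \<open>Retreat from the leaves first, and along the jumper only once the leaves behind it are unused.\<close>
lemma H_state_retract:
  assumes st: "H_state u n" and "n \<noteq> (\<lambda>_. 0)"
  shows "\<exists>e\<in>incident H_edges H_ends u. n e \<noteq> 0 \<and> H_state (other_end H_ends e u) (n(e := n e - 1))"
proof -
  have along: "\<exists>e\<in>incident H_edges H_ends u. n e \<noteq> 0 \<and> H_state (other_end H_ends e u) (n(e := n e - 1))"
    if "e \<in> incident H_edges H_ends u" "n e \<noteq> 0"
      "(n(e := n e - 1)) 3 = 0 \<longrightarrow> (n(e := n e - 1)) 4 = 0 \<and> (n(e := n e - 1)) 5 = 0" for e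
    using that H_state_retract_along[OF st that] by blast
  have on_path: "n i \<noteq> 0" if "i \<in> H_path u" for i
    using H_state_odd[OF st that] by (metis even_zero)
  obtain k where "n k \<noteq> 0" using \<open>n \<noteq> (\<lambda>_. 0)\<close> by auto
  hence nonzero: "n 1 \<noteq> 0 \<or> n 2 \<noteq> 0 \<or> n 3 \<noteq> 0 \<or> n 4 \<noteq> 0 \<or> n 5 \<noteq> 0"
    using st unfolding H_state_def supported_def atLeastAtMost_1_5 by (cases "k \<in> {1, 2, 3, 4, 5}") auto
  have jumper: "n 3 = 0 \<longrightarrow> n 4 = 0 \<and> n 5 = 0" using st by (simp add: H_state_def)
  have "u \<le> 5" using st by (simp add: H_state_def)
  hence "u = 0 \<or> u = 1 \<or> u = 2 \<or> u = 3 \<or> u = 4 \<or> u = 5" by auto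
  thus ?thesis
  proof (elim disjE)
    assume "u = 0"
    hence "even (n 3)" using st by (simp add: H_state_def H_path_def)
    consider "n 1 \<noteq> 0" | "n 2 \<noteq> 0" | "n 3 \<noteq> 0" using nonzero jumper by auto
    thus ?thesis
    proof cases
      case 1
      thus ?thesis using jumper by (intro along[of 1]) (simp_all add: H_incident \<open>u = 0\<close>)
    next
      case 2
      thus ?thesis using jumper by (intro along[of 2]) (simp_all add: H_incident \<open>u = 0\<close>)
    next
      case 3
      hence "n 3 - 1 \<noteq> 0" using \<open>even (n 3)\<close> by (cases "n 3 = 1") auto
      thus ?thesis using 3 by (intro along[of 3]) (simp_all add: H_incident \<open>u = 0\<close>)
    qed
  next
    assume "u = 1"
    hence "n 3 \<noteq> 0" using on_path[of 3] by (simp add: H_path_def)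
    consider "n 4 \<noteq> 0" | "n 5 \<noteq> 0" | "n 4 = 0" "n 5 = 0" by auto
    thus ?thesis
    proof cases
      case 1
      thus ?thesis using \<open>n 3 \<noteq> 0\<close> by (intro along[of 4]) (simp_all add: H_incident \<open>u = 1\<close>)
    next
      case 2
      thus ?thesis using \<open>n 3 \<noteq> 0\<close> by (intro along[of 5]) (simp_all add: H_incident \<open>u = 1\<close>)
    next
      case 3
      thus ?thesis using \<open>n 3 \<noteq> 0\<close> by (intro along[of 3]) (simp_all add: H_incident \<open>u = 1\<close>)
    qed
  next
    assume "u = 2"
    thus ?thesis using on_path[of 1] jumper by (intro along[of 1]) (simp_all add: H_incident H_path_def)
  next
    assume "u = 3"
    thus ?thesis using on_path[of 2] jumper by (intro along[of 2]) (simp_all add: H_incident H_path_def)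
  next
    assume "u = 4"
    thus ?thesis using on_path[of 3] on_path[of 4] by (intro along[of 4]) (simp_all add: H_incident H_path_def)
  next
    assume "u = 5"
    thus ?thesis using on_path[of 3] on_path[of 5] by (intro along[of 5]) (simp_all add: H_incident H_path_def)
  qed
qed

lemma walks_H_iff: "(u, n) \<in> walks H_edges H_ends 0 \<longleftrightarrow> H_state u n"
proof
  assume "(u, n) \<in> walks H_edges H_ends 0"
  thus "H_state u n"
  proof (induction rule: walks.induct)
    case start
    show ?case by (simp add: H_state_def H_path_def supported_def)
  next
    case (step u n e)
    show ?case using step.IH step.hyps(2) by (rule H_state_step)
  qed
next
  assume "H_state u n"
  moreover have "finite H_edges" by (simp add: H_edges_def)
  ultimately show "(u, n) \<in> walks H_edges H_ends 0"
    using walks_if_retractable[OF _ H_state_zero H_state_retract] by blast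
qed

lemma mem_shifted_lattice_H:
  assumes "S \<subseteq> {1..5}" "supported {1..5} c"
  shows "m \<in> shifted_lattice H_edges t S c T \<longleftrightarrow> supported {1..5} m \<and>
    (\<forall>i\<in>{1..5}. if i \<in> S then c i \<le> m i \<and> even (m i - c i) else m i = c i) \<and> walk_time H_edges t m \<le> T"
proof -
  have "(\<forall>i\<in>S. c i \<le> m i \<and> even (m i - c i)) \<and> (\<forall>i. i \<notin> S \<longrightarrow> m i = c i) \<longleftrightarrow> supported {1..5} m \<and>
    (\<forall>i\<in>{1..5}. if i \<in> S then c i \<le> m i \<and> even (m i - c i) else m i = c i)"
    using assms unfolding supported_def subset_iff by (smt (verit))
  thus ?thesis unfolding shifted_lattice_def mem_Collect_eq by blast
qed

lemma mem_reached_not_via_H: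
  "m \<in> reached_not_via H_edges H_ends t 0 T e u \<longleftrightarrow>
    H_state (other_end H_ends e u) m \<and> walk_time H_edges t m \<le> T \<and> \<not> (m e \<noteq> 0 \<and> H_state u (m(e := m e - 1)))"
  by (simp add: reached_not_via_def reached_def walks_H_iff)

lemma reached_not_via_H:
  "reached_not_via H_edges H_ends t 0 T 1 0 = {}"
  "reached_not_via H_edges H_ends t 0 T 1 2 =
     shifted_lattice H_edges t {2, 3, 4, 5} ((\<lambda>_. 0)(3 := 2)) T \<union> shifted_lattice H_edges t {2} (\<lambda>_. 0) T"
  "reached_not_via H_edges H_ends t 0 T 2 0 = {}"
  "reached_not_via H_edges H_ends t 0 T 2 3 =
     shifted_lattice H_edges t {1, 3, 4, 5} ((\<lambda>_. 0)(3 := 2)) T \<union> shifted_lattice H_edges t {1} (\<lambda>_. 0) T"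
  "reached_not_via H_edges H_ends t 0 T 3 0 =
     shifted_lattice H_edges t {1, 2, 4, 5} ((\<lambda>_. 0)(3 := 1, 4 := 2)) T
     \<union> shifted_lattice H_edges t {1, 2, 5} ((\<lambda>_. 0)(3 := 1, 5 := 2)) T"
  "reached_not_via H_edges H_ends t 0 T 3 1 = shifted_lattice H_edges t {1, 2} (\<lambda>_. 0) T"
  "reached_not_via H_edges H_ends t 0 T 4 1 = {}"
  "reached_not_via H_edges H_ends t 0 T 4 4 = shifted_lattice H_edges t {1, 2, 3, 5} ((\<lambda>_. 0)(3 := 1)) T"
  "reached_not_via H_edges H_ends t 0 T 5 1 = {}"
  "reached_not_via H_edges H_ends t 0 T 5 5 = shifted_lattice H_edges t {1, 2, 3, 4} ((\<lambda>_. 0)(3 := 1)) T"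
  \<comment> \<open>\<open>One_nat_def\<close> would rewrite the label \<open>1\<close> to \<open>Suc 0\<close> before \<open>ball_1_5\<close> could apply.\<close>
  by (rule set_eqI; simp del: One_nat_def add: mem_reached_not_via_H mem_shifted_lattice_H H_state_def
      ball_1_5 H_path_def other_end_def H_ends_def; auto simp: Suc_le_eq odd_pos)+

lemma num_points_H_eq:
  assumes pos: "\<forall>i\<in>{1..5}. t i > 0" and inj: "inj_on (walk_time H_edges t) {n. supported H_edges n}"
  shows "num_points H_edges H_ends t 0 T =
    lattice_count t {2, 3, 4, 5} ((T - 2 * t 3) / 2) + lattice_count t {2} (T / 2)
    + lattice_count t {1, 3, 4, 5} ((T - 2 * t 3) / 2) + lattice_count t {1} (T / 2)
    + lattice_count t {1, 2, 4, 5} ((T - t 3 - 2 * t 4) / 2) + lattice_count t {1, 2, 5} ((T - t 3 - 2 * t 5) / 2)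
    + lattice_count t {1, 2} (T / 2)
    + lattice_count t {1, 2, 3, 5} ((T - t 3) / 2) + lattice_count t {1, 2, 3, 4} ((T - t 3) / 2)"
proof -
  have E: "finite H_edges" "\<forall>i\<in>H_edges. t i > 0" using pos by (simp_all add: H_edges_def)
  note card_Un = card_shifted_lattice_Un[OF E, of _ _ _ _ 3] card_shifted_lattice_Un[OF E, of _ _ _ _ 4]
  note card = card_shifted_lattice[OF E(1)]
  show ?thesis
    unfolding num_points_eq_sum_not_via[OF E inj]
    by (simp del: One_nat_def add: sum_H_edges H_ends_def reached_not_via_H card_Un card walk_time_H
      mem_H_edges) (simp add: algebra_simps)
qed

lemma H'_ends_eq_comp: "H'_ends = H_ends \<circ> transpose 1 5"
  by (auto simp: fun_eq_iff H'_ends_def H_ends_def transpose_def)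

lemma num_points_H'_eq_transpose:
  "num_points H_edges H'_ends t A T = num_points H_edges H_ends (t \<circ> transpose 1 5) A T"
proof -
  let ?\<sigma> = "transpose (1::nat) 5"
  have "?\<sigma> -` H_edges = H_edges" by (auto simp: H_edges_def transpose_def split: if_splits)
  moreover have "t \<circ> ?\<sigma> \<circ> ?\<sigma> = t" by (simp add: comp_assoc)
  ultimately show ?thesis
    using num_points_comp[of ?\<sigma> H_edges H_ends "t \<circ> ?\<sigma>" A T] by (simp add: H'_ends_eq_comp)
qed

lemma inj_on_walk_time_H:
  "rat_independent {1..5} t \<Longrightarrow> inj_on (walk_time H_edges t) {n. supported H_edges n}"
  using inj_on_walk_time[of H_edges t] by (simp add: H_edges_def)

lemma num_points_H'_eq:
  assumes pos: "\<forall>i\<in>{1..5}. t i > 0" and indep: "rat_independent {1..5} t"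
  shows "num_points H_edges H'_ends t 0 T =
    lattice_count t {1, 2, 3, 4} ((T - 2 * t 3) / 2) + lattice_count t {2} (T / 2)
    + lattice_count t {1, 3, 4, 5} ((T - 2 * t 3) / 2) + lattice_count t {5} (T / 2)
    + lattice_count t {1, 2, 4, 5} ((T - t 3 - 2 * t 4) / 2) + lattice_count t {1, 2, 5} ((T - t 3 - 2 * t 1) / 2)
    + lattice_count t {2, 5} (T / 2)
    + lattice_count t {1, 2, 3, 5} ((T - t 3) / 2) + lattice_count t {2, 3, 4, 5} ((T - t 3) / 2)"
proof -
  let ?\<sigma> = "transpose (1::nat) 5"
  have perm: "?\<sigma> permutes {1..5}" by (rule permutes_swap_id) auto
  have pos': "\<forall>i\<in>{1..5}. (t \<circ> ?\<sigma>) i > 0" using pos by (auto simp: transpose_def)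
  have images: "?\<sigma> ` {2, 3, 4, 5} = {1, 2, 3, 4}" "?\<sigma> ` {2} = {2}" "?\<sigma> ` {1, 3, 4, 5} = {1, 3, 4, 5}"
    "?\<sigma> ` {1} = {5}" "?\<sigma> ` {1, 2, 4, 5} = {1, 2, 4, 5}" "?\<sigma> ` {1, 2, 5} = {1, 2, 5}"
    "?\<sigma> ` {1, 2} = {2, 5}" "?\<sigma> ` {1, 2, 3, 5} = {1, 2, 3, 5}" "?\<sigma> ` {1, 2, 3, 4} = {2, 3, 4, 5}"
    by (auto simp: transpose_def)
  have transposed: "(t \<circ> ?\<sigma>) 3 = t 3" "(t \<circ> ?\<sigma>) 4 = t 4" "(t \<circ> ?\<sigma>) 5 = t 1" by simp_all
  show ?thesis
    using num_points_H_eq[OF pos' inj_on_walk_time_H[OF rat_independent_comp[OF perm indep]], of T]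
    unfolding lattice_count_comp[OF bij_transpose] images transposed num_points_H'_eq_transpose .
qed

lemma num_points_H_swap_diff:
  fixes t :: "nat \<Rightarrow> real" and T :: real
  assumes pos: "\<forall>i\<in>{1..5}. t i > 0" and indep: "rat_independent {1..5} t"
  defines "L \<equiv> \<lambda>S y. real (lattice_count t S y)" and "x \<equiv> (T - t 3) / 2"
  shows "real (num_points H_edges H_ends t vA T) - real (num_points H_edges H'_ends t vA T)
      - (- (1 / (96 * t 2 * t 4)) * (1 / t 5 - 1 / t 1) * T ^ 3) =
    (L {2, 3, 4, 5} (x - t 3 / 2) - L {2, 3, 4, 5} x + t 3 * x ^ 3 / (12 * prod t {2, 3, 4, 5}))
    - (L {1, 2, 3, 4} (x - t 3 / 2) - L {1, 2, 3, 4} x + t 3 * x ^ 3 / (12 * prod t {1, 2, 3, 4}))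
    + (L {1} (T / 2) - L {5} (T / 2)) + (L {1, 2} (T / 2) - L {2, 5} (T / 2)) + (L {2, 5} x - L {1, 2} x)
    + 1 / (96 * t 2 * t 4) * (1 / t 1 - 1 / t 5) * ((T - t 3) ^ 3 - T ^ 3)"
proof -
  have t_pos: "t 1 > 0" "t 2 > 0" "t 3 > 0" "t 4 > 0" "t 5 > 0" using pos by auto
  have args: "(T - 2 * t 3) / 2 = x - t 3 / 2" "(T - t 3 - 2 * t 5) / 2 = x - t 5"
    "(T - t 3 - 2 * t 1) / 2 = x - t 1" "(T - t 3) / 2 = x" by (simp_all add: x_def field_simps)
  have "L {1, 2, 5} (x - t 5) - L {1, 2, 5} (x - t 1) = L {2, 5} x - L {1, 2} x"
    using lattice_count_remove[of "{1, 2, 5}" t 5 x] lattice_count_remove[of "{1, 2, 5}" t 1 x] pos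
    by (simp add: L_def insert_Diff_if)
  hence "real (num_points H_edges H_ends t vA T) - real (num_points H_edges H'_ends t vA T) =
    (L {2, 3, 4, 5} (x - t 3 / 2) - L {2, 3, 4, 5} x) - (L {1, 2, 3, 4} (x - t 3 / 2) - L {1, 2, 3, 4} x)
    + (L {1} (T / 2) - L {5} (T / 2)) + (L {1, 2} (T / 2) - L {2, 5} (T / 2)) + (L {2, 5} x - L {1, 2} x)"
    unfolding L_def num_points_H_eq[OF pos inj_on_walk_time_H[OF indep]] num_points_H'_eq[OF pos indep]
      args of_nat_add vA_def by linarith
  moreover have "t 3 * x ^ 3 / (12 * prod t {1, 2, 3, 4}) - t 3 * x ^ 3 / (12 * prod t {2, 3, 4, 5})
      = 1 / (96 * t 2 * t 4) * (1 / t 1 - 1 / t 5) * (T - t 3) ^ 3"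
    using t_pos by (simp add: x_def field_simps)
  moreover have "- (1 / (96 * t 2 * t 4)) * (1 / t 5 - 1 / t 1) * T ^ 3
      = 1 / (96 * t 2 * t 4) * (1 / t 1 - 1 / t 5) * T ^ 3"
    by (simp add: right_diff_distrib left_diff_distrib)
  ultimately show ?thesis by (simp only: right_diff_distrib[of _ "(T - t 3) ^ 3"])
qed

theorem mainTheorem5:
  fixes t :: "nat \<Rightarrow> real"
  assumes pos: "\<forall>i\<in>{1..5}. t i > 0"
    and A1: "assumption1 t"
  shows "(\<lambda>T. real (num_points H_edges H_ends t vA T) - real (num_points H_edges H'_ends t vA T)
              - (- (1 / (96 * t 2 * t 4)) * (1 / t 5 - 1 / t 1) * T ^ 3))
         \<in> o[at_top](\<lambda>T. T ^ 3)"
proof -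
  have indep: "rat_independent {1..5} t" using A1 by (simp add: assumption1_def rat_independent_def)
  have sub: "finite S" "\<forall>i\<in>S. t i > 0" if "S \<subseteq> {1..5}" for S
    using that pos finite_subset by auto
  have quartic: "(\<lambda>T. real (lattice_count t S ((T - t 3) / 2 - t 3 / 2)) - real (lattice_count t S ((T - t 3) / 2))
      + t 3 * ((T - t 3) / 2) ^ 3 / (12 * prod t S)) \<in> o(\<lambda>T. T ^ 3)"
    if "S \<subseteq> {1..5}" "card S = 4" for S
    using lattice_count_half_shift[OF sub[OF that(1)] that(2)] A1 that unfolding assumption1_def by auto
  have small: "(\<lambda>T. real (lattice_count t S (g T))) \<in> o(\<lambda>T. T ^ 3)"
    if "S \<subseteq> {1..5}" "card S \<le> 2" "g = (\<lambda>T. T / 2) \<or> g = (\<lambda>T. (T - t 3) / 2)" for S g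
    using that(3) by (elim disjE) (rule lattice_count_smallo_compose[OF sub[OF that(1)]];
      use that(2) in \<open>simp; real_asymp\<close>)+
  have "(\<lambda>T. 1 / (96 * t 2 * t 4) * (1 / t 1 - 1 / t 5) * ((T - t 3) ^ 3 - T ^ 3)) \<in> o(\<lambda>T. T ^ 3)"
    by real_asymp
  thus ?thesis
    unfolding num_points_H_swap_diff[OF pos indep] by (intro quartic small sum_in_smallo; simp)
qed

end
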